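(* Let $\hat q,\hat p$ be $n\times n$ parametric matrices and $M$ an invertible $n\times n$ $(\hat q,\hat p)$-Manin matrix over $\mathfrak R$. Let $I=(i_1<\dots<i_k)$ be an increasing multi-index and $J=(j_1,\dots,j_k)$ any multi-index, both with entries in $\{1,\dots,n\}$. Then $$\varepsilon(\hat p,I^c\oplus I^{\tau})\,\mathrm{cdet}_{\hat q}(M)\,\mathrm{cdet}_{\hat p'}((M^{-1})_{IJ})=\varepsilon(\hat q,J^c\oplus J^{\tau})\,\mathrm{cdet}_{\hat q}(M_{J^cI^c}),$$ where, when $J$ has a repeated entry, the right-hand side is understood to be $0$.
   Context: $\mathfrak R$ is an associative unital algebra over $\mathbb C$. A parametric $n\times n$ matrix is a matrix $\hat q=(q_{ij})$ of nonzero complex numbers with $q_{ij}q_{ji}=1$, $q_{ii}=1$; $\hat p'=(p'_{ij})$ with $p'_{ij}=p_{ij}^{-1}$. An $n\times n$ matrix $M$ over $\mathfrak R$ is a $(\hat q,\hat p)$-Manin matrix if $M_{ik}M_{jk}=q_{ji}M_{jk}M_{ik}$ for $i<j$ and all $k$, and $M_{ik}M_{jl}-q_{ji}p_{kl}M_{jl}M_{ik}+p_{kl}M_{il}M_{jk}-q_{ji}M_{jk}M_{il}=0$ for $i<j$, $k<l$. For a multi-index $I$ with distinct entries in $\{1,\dots,n\}$, $I^c$ is the increasing multi-index of elements of $\{1,\dots,n\}$ not in $I$; $I^{\tau}=(i_k,\dots,i_1)$ is the reverse; $\oplus$ is juxtaposition. For a multi-index $I$, $\varepsilon(\hat q,I)=0$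 if two entries coincide, otherwise $\varepsilon(\hat q,I)=\prod_{s<t,\ i_s>i_t}(-q_{i_si_t})$. For increasing $I=(i_1<\dots<i_r)$ and $\sigma\in S_r$, $\varepsilon(\hat q,I,\sigma)=\prod_{s<t,\ \sigma(s)>\sigma(t)}(-q_{i_{\sigma(s)}i_{\sigma(t)}})$. For any matrix $X$, increasing $I$ and any multi-index $J=(j_1,\dots,j_r)$, $\mathrm{cdet}_{\hat q}(X_{IJ})=\sum_{\sigma\in S_r}\varepsilon(\hat q,I,\sigma)X_{i_{\sigma(1)},j_1}\cdots X_{i_{\sigma(r)},j_r}$ (likewise with any parametric matrix in place of $\hat q$); $\mathrm{cdet}_{\hat q}(X)$ is the case $I=J=(1,\dots,n)$. *)

theory Defs
  imports Complex_Main "HOL-Combinatorics.Permutations"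
begin

text \<open>A unital associative algebra over the complex numbers is modelled as a ring
  'a :: ring_1 together with its structure map scal : complex -> 'a, a unital ring
  homomorphism into the centre of 'a (scalar multiplication c.x = scal c * x).\<close>
definition complex_algebra_map :: "(complex \<Rightarrow> 'a::ring_1) \<Rightarrow> bool" where
  "complex_algebra_map scal \<longleftrightarrow>
     scal 1 = 1 \<and>
     (\<forall>a b. scal (a + b) = scal a + scal b) \<and>
     (\<forall>a b. scal (a * b) = scal a * scal b) \<and>
     (\<forall>c x. scal c * x = x * scal c)"

text \<open>Matrices are functions nat => nat => _, indices range over {1..n}.\<close>
definition param_matrix :: "nat \<Rightarrow> (nat \<Rightarrow> nat \<Rightarrow> complex) \<Rightarrow> bool" where
  "param_matrix n q \<longleftrightarrow>
     (\<forall>i\<in>{1..n}. \<forall>j\<in>{1..n}. q i j \<noteq> 0 \<and> q i j * q j i = 1) \<and>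
     (\<forall>i\<in>{1..n}. q i i = 1)"

definition pinv :: "(nat \<Rightarrow> nat \<Rightarrow> complex) \<Rightarrow> nat \<Rightarrow> nat \<Rightarrow> complex" where
  "pinv p = (\<lambda>i j. inverse (p i j))"

definition manin ::
  "(complex \<Rightarrow> 'a::ring_1) \<Rightarrow> nat \<Rightarrow> (nat \<Rightarrow> nat \<Rightarrow> complex) \<Rightarrow> (nat \<Rightarrow> nat \<Rightarrow> complex)
     \<Rightarrow> (nat \<Rightarrow> nat \<Rightarrow> 'a) \<Rightarrow> bool" where
  "manin scal n q p M \<longleftrightarrow>
     (\<forall>i\<in>{1..n}. \<forall>j\<in>{1..n}. \<forall>k\<in>{1..n}. i < j \<longrightarrow>
        M i k * M j k = scal (q j i) * M j k * M i k) \<and>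
     (\<forall>i\<in>{1..n}. \<forall>j\<in>{1..n}. \<forall>k\<in>{1..n}. \<forall>l\<in>{1..n}. i < j \<longrightarrow> k < l \<longrightarrow>
        M i k * M j l - scal (q j i * p k l) * M j l * M i k
          + scal (p k l) * M i l * M j k - scal (q j i) * M j k * M i l = 0)"

definition mat_mult :: "nat \<Rightarrow> (nat \<Rightarrow> nat \<Rightarrow> 'a::ring_1) \<Rightarrow> (nat \<Rightarrow> nat \<Rightarrow> 'a) \<Rightarrow> nat \<Rightarrow> nat \<Rightarrow> 'a" where
  "mat_mult n A B = (\<lambda>i j. \<Sum>k = 1..n. A i k * B k j)"

definition mat_one :: "nat \<Rightarrow> nat \<Rightarrow> 'a::ring_1" where
  "mat_one = (\<lambda>i j. if i = j then 1 else 0)"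

definition is_inverse :: "nat \<Rightarrow> (nat \<Rightarrow> nat \<Rightarrow> 'a::ring_1) \<Rightarrow> (nat \<Rightarrow> nat \<Rightarrow> 'a) \<Rightarrow> bool" where
  "is_inverse n M N \<longleftrightarrow>
     (\<forall>i\<in>{1..n}. \<forall>j\<in>{1..n}. mat_mult n M N i j = mat_one i j \<and> mat_mult n N M i j = mat_one i j)"

text \<open>Multi-indices are lists; position s of the paper is list index s-1.\<close>
definition eps :: "(nat \<Rightarrow> nat \<Rightarrow> complex) \<Rightarrow> nat list \<Rightarrow> complex" where
  "eps q I = (if \<not> distinct I then 0 else
     (\<Prod>(s,t) \<in> {(s,t). s < t \<and> t < length I \<and> I ! s > I ! t}. - q (I ! s) (I ! t)))"

definition eps_perm :: "(nat \<Rightarrow> nat \<Rightarrow> complex) \<Rightarrow> nat list \<Rightarrow> (nat \<Rightarrow> nat) \<Rightarrow> complex" where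
  "eps_perm q I \<sigma> =
     (\<Prod>(s,t) \<in> {(s,t). s < t \<and> t < length I \<and> \<sigma> s > \<sigma> t}. - q (I ! \<sigma> s) (I ! \<sigma> t))"

text \<open>cdet_q(X_{IJ}) for increasing I and arbitrary J with length J = length I.\<close>
definition cdet :: "(complex \<Rightarrow> 'a::ring_1) \<Rightarrow> (nat \<Rightarrow> nat \<Rightarrow> complex) \<Rightarrow> nat list \<Rightarrow> nat list
     \<Rightarrow> (nat \<Rightarrow> nat \<Rightarrow> 'a) \<Rightarrow> 'a" where
  "cdet scal q I J X =
     (\<Sum>\<sigma> \<in> {\<sigma>. \<sigma> permutes {..<length I}}.
        scal (eps_perm q I \<sigma>) * prod_list (map (\<lambda>s. X (I ! \<sigma> s) (J ! s)) [0..<length I]))"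

definition compl_idx :: "nat \<Rightarrow> nat list \<Rightarrow> nat list" where
  "compl_idx n I = filter (\<lambda>i. i \<notin> set I) [1..<n+1]"

end

theory Submission
  imports Defs "HOL-Combinatorics.Multiset_Permutations"
begin

(* Both sides are evaluations of the contracted sum
     sum over l in {1..n}^k of  cdet_q(M_{[n], I^c + l^tau}) N_{l1 j1} ... N_{lk jk},   N = M^-1.

   Columns: the Manin relations make cdet_q(M_{[n], L}) change by the factor -p_{ab} under an
   adjacent column swap (a, b), hence cdet_q(M_{[n], L}) = eps(p, L) cdet_q(M), which vanishes
   unless L has distinct entries.  Only the arrangements l of I survive, and
   eps(p, I^c + l^tau) = eps(p, I^c + I^tau) eps(p', l) turns the sum into the left-hand side.

   Rows: expanding cdet_q over row orderings L, the last k factors M_{L(m+1) lk} ... M_{L(n) l1}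
   are immediately followed by N_{l1 j1} ... N_{lk jk}, so summing over l1, ..., lk contracts
   M N = 1 from the inside out.  Only orderings ending in J^tau survive, which gives the
   right-hand side. *)

definition inversions :: "nat list \<Rightarrow> (nat \<times> nat) set" where
  "inversions L = {(s,t). s < t \<and> t < length L \<and> L ! s > L ! t}"

lemma finite_inversions: "finite (inversions L)"
  by (rule finite_subset[of _ "{..<length L} \<times> {..<length L}"]) (auto simp: inversions_def)

lemma eps_eq_prod_inversions:
  "distinct L \<Longrightarrow> eps q L = (\<Prod>(s,t)\<in>inversions L. - q (L!s) (L!t))"
  by (simp add: eps_def inversions_def)

lemma eps_Nil [simp]: "eps q [] = 1"
  by (simp add: eps_def)

lemma eps_sorted:
  assumes "sorted_wrt (<) L"
  shows "eps q L = 1"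
proof -
  have "inversions L = {}"
    using assms by (auto simp: inversions_def sorted_wrt_iff_nth_less dest: less_asym)
  then show ?thesis
    using assms by (simp add: eps_eq_prod_inversions strict_sorted_iff)
qed

lemma eps_single [simp]: "eps q [x] = 1"
  by (simp add: eps_sorted)

lemma inversions_Cons:
  "inversions (x # L) = (\<lambda>t. (0, Suc t)) ` {t. t < length L \<and> L ! t < x}
     \<union> (\<lambda>(s,t). (Suc s, Suc t)) ` inversions L"
proof (rule set_eqI)
  fix st :: "nat \<times> nat"
  obtain s t where "st = (s,t)" by (cases st)
  then show "st \<in> inversions (x # L) \<longleftrightarrow> st \<in> (\<lambda>t. (0, Suc t)) ` {t. t < length L \<and> L ! t < x}
     \<union> (\<lambda>(s,t). (Suc s, Suc t)) ` inversions L"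
    unfolding inversions_def by (cases s; cases t) (auto simp: image_iff)
qed

lemma eps_Cons:
  assumes "distinct (x # L)"
  shows "eps q (x # L) = (\<Prod>y\<in>{y\<in>set L. y < x}. - q x y) * eps q L"
proof -
  have dL: "distinct L" using assms by simp
  let ?A = "(\<lambda>t. (0, Suc t)) ` {t. t < length L \<and> L ! t < x}"
  let ?B = "(\<lambda>(s,t). (Suc s, Suc t)) ` inversions L"
  let ?f = "\<lambda>(s,t). - q ((x # L) ! s) ((x # L) ! t)"
  have "eps q (x # L) = prod ?f (?A \<union> ?B)"
    using assms by (simp add: eps_eq_prod_inversions inversions_Cons)
  also have "\<dots> = prod ?f ?A * prod ?f ?B"
    using finite_inversions[of L] by (intro prod.union_disjoint) auto
  also have "prod ?f ?A = (\<Prod>t\<in>{t. t < length L \<and> L ! t < x}. - q x (L ! t))"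
    by (subst prod.reindex) (auto simp: inj_on_def)
  also have "\<dots> = (\<Prod>y\<in>{y\<in>set L. y < x}. - q x y)"
  proof -
    have "{y\<in>set L. y < x} = nth L ` {t. t < length L \<and> L ! t < x}"
      by (auto simp: in_set_conv_nth)
    moreover have "inj_on (nth L) {t. t < length L \<and> L ! t < x}"
      using inj_on_nth[OF dL] by auto
    ultimately show ?thesis by (simp add: prod.reindex)
  qed
  also have "prod ?f ?B = eps q L"
    using dL by (subst prod.reindex) (auto simp: inj_on_def eps_eq_prod_inversions intro!: prod.cong)
  finally show ?thesis .
qed

definition eps_cross :: "(nat \<Rightarrow> nat \<Rightarrow> complex) \<Rightarrow> nat set \<Rightarrow> nat set \<Rightarrow> complex" where
  "eps_cross q A B = (\<Prod>(a,b)\<in>{(a,b). a \<in> A \<and> b \<in> B \<and> b < a}. - q a b)"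

lemma eps_cross_empty [simp]: "eps_cross q {} B = 1" "eps_cross q A {} = 1"
  by (simp_all add: eps_cross_def)

lemma eps_cross_insert_left:
  assumes "finite A" "finite B" "x \<notin> A"
  shows "eps_cross q (insert x A) B = (\<Prod>b\<in>{b\<in>B. b < x}. - q x b) * eps_cross q A B"
proof -
  have split: "{(a,b). a \<in> insert x A \<and> b \<in> B \<and> b < a}
      = Pair x ` {b\<in>B. b < x} \<union> {(a,b). a \<in> A \<and> b \<in> B \<and> b < a}"
    by auto
  have "finite {(a,b). a \<in> A \<and> b \<in> B \<and> b < a}"
    by (rule finite_subset[of _ "A \<times> B"]) (use assms in auto)
  then show ?thesis
    unfolding eps_cross_def split using assms
    by (subst prod.union_disjoint) (auto simp: prod.reindex inj_on_def)
qed

lemma eps_cross_insert_right: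
  assumes "finite A" "finite B" "x \<notin> B"
  shows "eps_cross q A (insert x B) = (\<Prod>a\<in>{a\<in>A. x < a}. - q a x) * eps_cross q A B"
proof -
  have split: "{(a,b). a \<in> A \<and> b \<in> insert x B \<and> b < a}
      = (\<lambda>a. (a, x)) ` {a\<in>A. x < a} \<union> {(a,b). a \<in> A \<and> b \<in> B \<and> b < a}"
    by auto
  have "finite {(a,b). a \<in> A \<and> b \<in> B \<and> b < a}"
    by (rule finite_subset[of _ "A \<times> B"]) (use assms in auto)
  then show ?thesis
    unfolding eps_cross_def split using assms
    by (subst prod.union_disjoint) (auto simp: prod.reindex inj_on_def)
qed

lemma eps_append:
  "distinct (A @ B) \<Longrightarrow> eps q (A @ B) = eps q A * eps q B * eps_cross q (set A) (set B)"
proof (induction A)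
  case (Cons x A)
  then have d: "distinct (x # A @ B)" by simp
  have "{y\<in>set A \<union> set B. y < x} = {y\<in>set A. y < x} \<union> {y\<in>set B. y < x}" by auto
  then have "(\<Prod>y\<in>{y\<in>set (A @ B). y < x}. - q x y)
      = (\<Prod>y\<in>{y\<in>set A. y < x}. - q x y) * (\<Prod>y\<in>{y\<in>set B. y < x}. - q x y)"
    using Cons.prems by (simp add: prod.union_disjoint disjoint_iff)
  then show ?case
    using Cons eps_Cons[OF d] eps_Cons[of x A q] eps_cross_insert_left[of "set A" "set B" x q]
    by (simp add: algebra_simps)
qed simp

lemma eps_mult_eps_rev:
  "distinct L \<Longrightarrow> eps q L * eps q (rev L) = eps_cross q (set L) (set L)"
proof (induction L)
  case (Cons x L)
  then have xL: "x \<notin> set L" and dL: "distinct L" by auto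
  have "eps q (rev (x # L)) = eps q (rev L) * eps_cross q (set L) {x}"
    using eps_append[of "rev L" "[x]" q] Cons.prems by (simp add: eps_sorted)
  moreover have "eps_cross q (set L) {x} = (\<Prod>a\<in>{a\<in>set L. x < a}. - q a x)"
    using eps_cross_insert_right[of "set L" "{}" x q] by simp
  moreover have "eps_cross q (set (x # L)) (set (x # L))
      = (\<Prod>y\<in>{y\<in>set L. y < x}. - q x y) * (\<Prod>a\<in>{a\<in>set L. x < a}. - q a x)
        * eps_cross q (set L) (set L)"
    using eps_cross_insert_left[of "set L" "insert x (set L)" x q]
      eps_cross_insert_right[of "set L" "set L" x q] xL
    by (simp add: mult.assoc cong: rev_conj_cong)
  ultimately show ?case
    using Cons.IH[OF dL] eps_Cons[OF Cons.prems] by (simp add: algebra_simps)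
qed simp

lemma eps_pinv_mult:
  assumes "param_matrix n p" "distinct L" "set L \<subseteq> {1..n}"
  shows "eps (pinv p) L * eps p L = 1"
proof -
  have "p (L ! s) (L ! t) \<noteq> 0" if "(s,t) \<in> inversions L" for s t
    using that assms(1,3) nth_mem[of s L] nth_mem[of t L]
    by (auto simp: inversions_def param_matrix_def subset_iff)
  then show ?thesis
    using assms(2)
    by (simp add: eps_eq_prod_inversions prod.distrib[symmetric] case_prod_unfold pinv_def
             cong: prod.cong)
qed

lemma eps_swap_adjacent:
  assumes "distinct (P @ a # b # S)" "a < b"
  shows "eps q (P @ b # a # S) = - q b a * eps q (P @ a # b # S)"
proof -
  have "{y\<in>set (a # S). y < b} = insert a {y\<in>set S. y < b}"
    and "{y\<in>set (b # S). y < a} = {y\<in>set S. y < a}"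
    using assms by auto
  then have "eps q (b # a # S) = - q b a * eps q (a # b # S)"
    using assms by (simp add: eps_Cons prod.insert algebra_simps)
  moreover have "set (b # a # S) = set (a # b # S)" by auto
  ultimately show ?thesis
    using assms eps_append[of P "a # b # S" q] eps_append[of P "b # a # S" q] by simp
qed

lemma eps_Cons_sort: "eps q (x # L) = eps q (x # sort L) * eps q L"
proof (cases "distinct (x # L)")
  case True
  then have "sorted_wrt (<) (sort L)"
    by (simp add: strict_sorted_iff)
  then show ?thesis
    using True eps_Cons[OF True] eps_Cons[of x "sort L" q] by (simp add: eps_sorted)
next
  case False
  then show ?thesis
    by (auto simp: eps_def)
qed

lemma eps_Cons_Cons_sorted:
  assumes "sorted_wrt (<) (y # S)" "y < x"
  shows "eps q (x # y # S) = - q x y * eps q (x # S)"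
proof (cases "x \<in> set S")
  case False
  then have distinct: "distinct (y # x # S)"
    using assms by (auto simp: strict_sorted_iff)
  have none_below: "{z\<in>set (x # S). z < y} = {}"
    using assms by auto
  have "eps q (y # x # S) = eps q (x # S)"
    using eps_Cons[OF distinct, of q] by (simp only: none_below prod.empty mult_1_left)
  then show ?thesis
    using eps_swap_adjacent[of "[]" y x S q] distinct assms(2) by simp
qed (simp add: eps_def)

lemma eps_append_rev_permutation:
  assumes p: "param_matrix n p" and I: "sorted_wrt (<) I" "set I \<subseteq> {1..n}"
    and C: "distinct C" "set C \<inter> set I = {}"
    and l: "l \<in> permutations_of_set (set I)"
  shows "eps p (C @ rev l) = eps p (C @ rev I) * eps (pinv p) l"
proof -
  have "distinct I"
    using I(1) by (simp add: strict_sorted_iff)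
  have l': "distinct l" "set l = set I"
    using l by (auto simp: permutations_of_set_def)
  have "eps p (rev l) = eps (pinv p) l * (eps p l * eps p (rev l))"
    using eps_pinv_mult[OF p l'(1)] l' I(2) by simp
  also have "\<dots> = eps (pinv p) l * eps p (rev I)"
    using eps_mult_eps_rev[OF l'(1)] eps_mult_eps_rev[OF \<open>distinct I\<close>] l'(2)
    by (simp add: eps_sorted[OF I(1)])
  finally have "eps p (rev l) = eps (pinv p) l * eps p (rev I)" .
  moreover have "distinct (C @ rev l)" "distinct (C @ rev I)"
    using C l' \<open>distinct I\<close> by auto
  ultimately show ?thesis
    using l'(2) by (simp add: eps_append)
qed

lemma eps_append_permutation:
  assumes C: "sorted_wrt (<) C" and A: "A \<in> permutations_of_set (set C)" and CB: "distinct (C @ B)"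
  shows "eps q (A @ B) = eps q (C @ B) * eps q A"
proof -
  have "distinct (A @ B)" "set A = set C"
    using A CB by (auto simp: permutations_of_set_def)
  then show ?thesis
    using CB by (simp add: eps_append eps_sorted[OF C])
qed

lemma strict_sorted_nth_less_iff:
  fixes K :: "'a::linorder list"
  assumes "sorted_wrt (<) K" "i < length K" "j < length K"
  shows "K ! i < K ! j \<longleftrightarrow> i < j"
  using assms sorted_wrt_nth_less[OF assms(1)]
  by (metis less_asym linorder_neqE_nat)

lemma distinct_length_le_card:
  "distinct xs \<Longrightarrow> set xs \<subseteq> A \<Longrightarrow> finite A \<Longrightarrow> length xs \<le> card A"
  by (metis card_mono distinct_card)

lemma sorted_compl_idx: "sorted_wrt (<) (compl_idx n I)"
  unfolding compl_idx_def by (rule sorted_wrt_filter) (rule sorted_wrt_upt)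

lemma set_compl_idx: "set (compl_idx n I) = {1..n} - set I"
  unfolding compl_idx_def by auto

lemma length_compl_idx:
  assumes "distinct I" "set I \<subseteq> {1..n}"
  shows "length (compl_idx n I) = n - length I"
proof -
  have "distinct (compl_idx n I)"
    using sorted_compl_idx strict_sorted_iff by blast
  then have "length (compl_idx n I) = card ({1..n} - set I)"
    by (simp add: distinct_card[symmetric] set_compl_idx)
  also have "\<dots> = n - length I"
    using assms by (simp add: card_Diff_subset distinct_card)
  finally show ?thesis .
qed

lemma distinct_append_rev_iff_permutation:
  assumes C: "distinct C" "set C = {1..n} - set I" and I: "distinct I" "set I \<subseteq> {1..n}"
    and l: "set l \<subseteq> {1..n}" "length l = length I"
  shows "distinct (C @ rev l) \<longleftrightarrow> l \<in> permutations_of_set (set I)"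
proof
  assume "distinct (C @ rev l)"
  then have "distinct l" "set l \<subseteq> set I"
    using C l by auto
  moreover from this have "card (set l) = card (set I)"
    using I l by (simp add: distinct_card)
  ultimately show "l \<in> permutations_of_set (set I)"
    by (metis card_subset_eq finite_set permutations_of_setI)
qed (use C in \<open>auto simp: permutations_of_set_def\<close>)

lemma permutations_of_set_with_suffix:
  assumes "finite U" "distinct B" "set B \<subseteq> U"
  shows "{L \<in> permutations_of_set U. drop (card U - length B) L = B}
       = (\<lambda>A. A @ B) ` permutations_of_set (U - set B)"
proof (rule set_eqI, rule iffI)
  fix L assume "L \<in> {L \<in> permutations_of_set U. drop (card U - length B) L = B}"
  then have L: "L \<in> permutations_of_set U" and suffix: "drop (card U - length B) L = B"
    by auto
  define A where "A = take (card U - length B) L"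
  have "L = A @ B"
    using suffix by (metis A_def append_take_drop_id)
  moreover have "A \<in> permutations_of_set (U - set B)"
    using L \<open>L = A @ B\<close> by (auto simp: permutations_of_set_def)
  ultimately show "L \<in> (\<lambda>A. A @ B) ` permutations_of_set (U - set B)"
    by blast
next
  fix L assume "L \<in> (\<lambda>A. A @ B) ` permutations_of_set (U - set B)"
  then obtain A where A: "A \<in> permutations_of_set (U - set B)" and L: "L = A @ B"
    by blast
  have "length A = card U - length B"
    using A assms by (simp add: length_finite_permutations_of_set card_Diff_subset distinct_card)
  then show "L \<in> {L \<in> permutations_of_set U. drop (card U - length B) L = B}"
    using A L assms by (auto simp: permutations_of_set_def)
qed

lemma prod_list_map2_append_rev:
  assumes "length L = length C + length l"
  shows "prod_list (map2 M L (C @ rev l))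
       = prod_list (map2 M (take (length C) L) C) * prod_list (rev (map2 M (rev (drop (length C) L)) l))"
proof -
  have "map2 M L (C @ rev l) = map2 M (take (length C) L) C @ map2 M (drop (length C) L) (rev l)"
    using assms zip_append[of "take (length C) L" C "drop (length C) L" "rev l"] by simp
  moreover have "map2 M (drop (length C) L) (rev l) = rev (map2 M (rev (drop (length C) L)) l)"
    using assms zip_rev[of "rev (drop (length C) L)" l] by (simp add: rev_map)
  ultimately show ?thesis
    by simp
qed

definition swap_adjacent :: "nat \<Rightarrow> 'a list \<Rightarrow> 'a list" where
  "swap_adjacent t L = L[t := L ! Suc t, Suc t := L ! t]"

lemma swap_adjacent_append: "length U = t \<Longrightarrow> swap_adjacent t (U @ i # j # V) = U @ j # i # V"
  by (simp add: swap_adjacent_def list_update_append nth_append)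

lemma list_split_adjacent:
  assumes "Suc t < length L"
  obtains U i j V where "L = U @ i # j # V" "length U = t"
proof -
  have "L = take t L @ L ! t # L ! Suc t # drop (Suc (Suc t)) L"
    using assms by (simp add: Cons_nth_drop_Suc)
  then show thesis
    using that assms by simp
qed

lemma bij_betw_swap_adjacent_permutations_of_set:
  assumes "Suc t < card A"
  shows "bij_betw (swap_adjacent t) (permutations_of_set A) (permutations_of_set A)"
proof -
  have "swap_adjacent t L \<in> permutations_of_set A \<and> swap_adjacent t (swap_adjacent t L) = L"
    if "L \<in> permutations_of_set A" for L
  proof -
    have "Suc t < length L"
      using that assms by (simp add: length_finite_permutations_of_set)
    then obtain U i j V where "L = U @ i # j # V" "length U = t"
      by (rule list_split_adjacent)
    then show ?thesis
      using that by (auto simp: swap_adjacent_append permutations_of_set_def)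
  qed
  then show ?thesis
    by (intro bij_betw_byWitness[where f' = "swap_adjacent t"]) auto
qed

lemma contract_right_inverse:
  fixes M N :: "nat \<Rightarrow> nat \<Rightarrow> 'a::ring_1"
  assumes inv: "\<And>i j. i \<in> {1..n} \<Longrightarrow> j \<in> {1..n} \<Longrightarrow> mat_mult n M N i j = mat_one i j"
  shows "length R = length J \<Longrightarrow> set R \<subseteq> {1..n} \<Longrightarrow> set J \<subseteq> {1..n} \<Longrightarrow>
    (\<Sum>l | set l \<subseteq> {1..n} \<and> length l = length R.
       prod_list (rev (map2 M R l)) * prod_list (map2 N l J))
    = (if R = J then 1 else 0)"
proof (induction R arbitrary: J)
  case Nil
  have "{l::nat list. set l \<subseteq> {1..n} \<and> length l = 0} = {[]}"
    by auto
  then show ?case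
    using Nil by simp
next
  case (Cons r R)
  obtain j J' where J: "J = j # J'"
    using Cons.prems(1) by (cases J) auto
  let ?W = "{l. set l \<subseteq> {1..n} \<and> length l = length R}"
  define A where "A l = prod_list (rev (map2 M R l))" for l
  define B where "B l = prod_list (map2 N l J')" for l
  have r: "r \<in> {1..n}" and j: "j \<in> {1..n}"
    using Cons.prems J by auto
  have "(\<Sum>l | set l \<subseteq> {1..n} \<and> length l = length (r # R).
          prod_list (rev (map2 M (r # R) l)) * prod_list (map2 N l J))
      = (\<Sum>(l, x)\<in>?W \<times> {1..n}. A l * M r x * (N x j * B l))"
    by (simp only: length_Cons lists_length_Suc_eq, subst sum.reindex)
       (auto simp: inj_on_def A_def B_def J mult.assoc intro!: sum.cong)
  also have "\<dots> = (\<Sum>l\<in>?W. A l * (\<Sum>x=1..n. M r x * N x j) * B l)"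
    by (simp add: sum.cartesian_product[symmetric] sum_distrib_left sum_distrib_right mult.assoc)
  also have "\<dots> = (\<Sum>l\<in>?W. if r = j then A l * B l else 0)"
    using inv[OF r j] by (simp add: mat_mult_def mat_one_def)
  also have "\<dots> = (if r # R = J then 1 else 0)"
  proof (cases "r = j")
    case True
    have "(\<Sum>l\<in>?W. A l * B l) = (if R = J' then 1 else 0)"
      unfolding A_def B_def by (rule Cons.IH) (use Cons.prems J in auto)
    then show ?thesis
      using True J by simp
  qed (use J in simp)
  finally show ?case .
qed

lemma eps_perm_eq_eps_permute_list:
  assumes K: "sorted_wrt (<) K" and \<sigma>: "\<sigma> permutes {..<length K}"
  shows "eps_perm q K \<sigma> = eps q (permute_list \<sigma> K)"
proof -
  let ?L = "permute_list \<sigma> K"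
  have \<sigma>_lt: "s < length K \<Longrightarrow> \<sigma> s < length K" for s
    using permutes_in_image[OF \<sigma>] by auto
  have nth_L: "s < length K \<Longrightarrow> ?L ! s = K ! \<sigma> s" for s
    using \<sigma> by (simp add: permute_list_nth)
  have inv: "inversions ?L = {(s,t). s < t \<and> t < length K \<and> \<sigma> s > \<sigma> t}"
    using K by (auto simp: inversions_def nth_L \<sigma>_lt strict_sorted_nth_less_iff)
  have "distinct ?L"
    using K \<sigma> by (simp add: strict_sorted_iff)
  then have "eps q ?L = (\<Prod>(s,t)\<in>inversions ?L. - q (?L ! s) (?L ! t))"
    by (rule eps_eq_prod_inversions)
  also have "\<dots> = eps_perm q K \<sigma>"
    unfolding inv eps_perm_def by (rule prod.cong) (auto simp: nth_L)
  finally show ?thesis ..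
qed

lemma bij_betw_permute_list_permutations_of_set:
  assumes K: "distinct K"
  shows "bij_betw (\<lambda>\<sigma>. permute_list \<sigma> K) {\<sigma>. \<sigma> permutes {..<length K}}
           (permutations_of_set (set K))"
proof (rule bij_betw_imageI)
  show "inj_on (\<lambda>\<sigma>. permute_list \<sigma> K) {\<sigma>. \<sigma> permutes {..<length K}}"
  proof (rule inj_onI, rule ext)
    fix \<sigma> \<tau> x
    assume \<sigma>: "\<sigma> \<in> {\<sigma>. \<sigma> permutes {..<length K}}" and \<tau>: "\<tau> \<in> {\<sigma>. \<sigma> permutes {..<length K}}"
      and eq: "permute_list \<sigma> K = permute_list \<tau> K"
    show "\<sigma> x = \<tau> x"
    proof (cases "x < length K")
      case True
      then have "K ! \<sigma> x = K ! \<tau> x"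
        using \<sigma> \<tau> arg_cong[OF eq, of "\<lambda>L. L ! x"] by (simp add: permute_list_nth)
      moreover have "\<sigma> x < length K" "\<tau> x < length K"
        using \<sigma> \<tau> True permutes_in_image by fastforce+
      ultimately show ?thesis
        using K by (simp add: nth_eq_iff_index_eq)
    next
      case False
      then show ?thesis
        using \<sigma> \<tau> by (simp add: permutes_not_in)
    qed
  qed
next
  show "(\<lambda>\<sigma>. permute_list \<sigma> K) ` {\<sigma>. \<sigma> permutes {..<length K}} = permutations_of_set (set K)"
  proof (rule set_eqI, rule iffI)
    fix L assume "L \<in> permutations_of_set (set K)"
    then have "mset L = mset K"
      using K by (simp add: permutations_of_set_def set_eq_iff_mset_eq_distinct[symmetric])
    then obtain \<sigma> where "\<sigma> permutes {..<length K}" "permute_list \<sigma> K = L"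
      by (metis mset_eq_permutation)
    then show "L \<in> (\<lambda>\<sigma>. permute_list \<sigma> K) ` {\<sigma>. \<sigma> permutes {..<length K}}"
      by blast
  qed (use K in \<open>auto simp: permutations_of_set_def\<close>)
qed

lemma cdet_eq_sum_permutations_of_set:
  assumes K: "sorted_wrt (<) K" and J: "length J = length K"
  shows "cdet scal q K J X
         = (\<Sum>L\<in>permutations_of_set (set K). scal (eps q L) * prod_list (map2 X L J))"
proof -
  have "distinct K"
    using K by (simp add: strict_sorted_iff)
  then have "(\<Sum>L\<in>permutations_of_set (set K). scal (eps q L) * prod_list (map2 X L J))
      = (\<Sum>\<sigma> | \<sigma> permutes {..<length K}.
           scal (eps q (permute_list \<sigma> K)) * prod_list (map2 X (permute_list \<sigma> K) J))"
    by (rule sum.reindex_bij_betw[OF bij_betw_permute_list_permutations_of_set, symmetric])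
  also have "\<dots> = cdet scal q K J X"
    unfolding cdet_def
  proof (rule sum.cong[OF refl])
    fix \<sigma> assume "\<sigma> \<in> {\<sigma>. \<sigma> permutes {..<length K}}"
    then have \<sigma>: "\<sigma> permutes {..<length K}" by simp
    have "map2 X (permute_list \<sigma> K) J = map (\<lambda>s. X (K ! \<sigma> s) (J ! s)) [0..<length K]"
      using J \<sigma> by (intro nth_equalityI) (simp_all add: permute_list_nth)
    then show "scal (eps q (permute_list \<sigma> K)) * prod_list (map2 X (permute_list \<sigma> K) J)
      = scal (eps_perm q K \<sigma>) * prod_list (map (\<lambda>s. X (K ! \<sigma> s) (J ! s)) [0..<length K])"
      using eps_perm_eq_eps_permute_list[OF K \<sigma>] by simp
  qed
  finally show ?thesis ..
qed

lemma cdet_upto_append_rev: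
  assumes "length C + length l = n"
  shows "cdet scal q [1..<n+1] (C @ rev l) X
       = (\<Sum>L\<in>permutations_of_set {1..n}. scal (eps q L) *
            (prod_list (map2 X (take (length C) L) C)
             * prod_list (rev (map2 X (rev (drop (length C) L)) l))))"
proof -
  have "cdet scal q [1..<n+1] (C @ rev l) X
      = (\<Sum>L\<in>permutations_of_set {1..n}. scal (eps q L) * prod_list (map2 X L (C @ rev l)))"
    using assms
    by (simp add: cdet_eq_sum_permutations_of_set atLeastLessThanSuc_atLeastAtMost del: upt_Suc)
  also have "\<dots> = (\<Sum>L\<in>permutations_of_set {1..n}. scal (eps q L) *
            (prod_list (map2 X (take (length C) L) C)
             * prod_list (rev (map2 X (rev (drop (length C) L)) l))))"
    using assms
    by (intro sum.cong refl) (simp add: length_finite_permutations_of_set prod_list_map2_append_rev)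
  finally show ?thesis .
qed

locale complex_algebra =
  fixes scal :: "complex \<Rightarrow> 'a::ring_1"
  assumes complex_algebra_map: "complex_algebra_map scal"
begin

lemma scal_one [simp]: "scal 1 = 1"
  and scal_add: "scal (c + d) = scal c + scal d"
  and scal_mult: "scal (c * d) = scal c * scal d"
  and scal_commute: "scal c * x = x * scal c"
  using complex_algebra_map unfolding complex_algebra_map_def by blast+

lemma scal_zero [simp]: "scal 0 = 0"
  using scal_add[of 0 0] by simp

lemma scal_minus: "scal (- c) = - scal c"
  using scal_add[of c "- c"] by (simp add: add_eq_0_iff)

lemma scal_scal: "scal c * (scal d * x) = scal (c * d) * x"
  by (simp add: scal_mult mult.assoc)

lemma mult_scal_left_commute: "x * (scal c * y) = scal c * (x * y)"
  by (metis mult.assoc scal_commute)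

lemma double_cancel:
  fixes x y :: 'a
  assumes "x + x = y + y"
  shows "x = y"
proof -
  have half: "scal (1/2) * (z + z) = z" for z
  proof -
    have "scal (1/2) * (z + z) = scal (1/2 + 1/2) * z"
      by (simp only: scal_add distrib_left distrib_right)
    then show ?thesis by simp
  qed
  show ?thesis
    using half[of x] half[of y] assms by metis
qed

lemma sum_eq_scaled_by_pairs:
  fixes f g :: "'b \<Rightarrow> 'a"
  assumes bij: "bij_betw \<sigma> A A"
    and pairs: "\<And>x. x \<in> A \<Longrightarrow> f x + f (\<sigma> x) = c * (g x + g (\<sigma> x))"
  shows "sum f A = c * sum g A"
proof (rule double_cancel)
  have "sum f A + sum f A = (\<Sum>x\<in>A. f x + f (\<sigma> x))"
    by (simp add: sum.distrib sum.reindex_bij_betw[OF bij])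
  also have "\<dots> = (\<Sum>x\<in>A. c * (g x + g (\<sigma> x)))"
    using pairs by (rule sum.cong[OF refl])
  also have "\<dots> = c * sum g A + c * sum g A"
    by (simp add: sum_distrib_left[symmetric] sum.distrib distrib_left sum.reindex_bij_betw[OF bij])
  finally show "sum f A + sum f A = c * sum g A + c * sum g A" .
qed

end

locale manin_matrix = complex_algebra scal for scal :: "complex \<Rightarrow> 'a::ring_1" +
  fixes n :: nat and q p :: "nat \<Rightarrow> nat \<Rightarrow> complex" and M :: "nat \<Rightarrow> nat \<Rightarrow> 'a"
  assumes param_p: "param_matrix n p" and manin_M: "manin scal n q p M"
begin

lemma manin_column_exchange:
  assumes ij: "i < j" and range: "i \<in> {1..n}" "j \<in> {1..n}" "a \<in> {1..n}" "b \<in> {1..n}"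
  shows "M i a * M j b - scal (q j i) * M j a * M i b
       = scal (- p a b) * (M i b * M j a - scal (q j i) * M j b * M i a)"
proof (cases a b rule: linorder_cases)
  case less
  then have "M i a * M j b - scal (q j i * p a b) * M j b * M i a
      + scal (p a b) * M i b * M j a - scal (q j i) * M j a * M i b = 0"
    using manin_M ij range unfolding manin_def by blast
  then show ?thesis
    by (simp add: scal_mult scal_minus algebra_simps)
next
  case equal
  moreover have "M i a * M j a = scal (q j i) * M j a * M i a"
    using manin_M ij range unfolding manin_def by blast
  moreover have "p a a = 1"
    using param_p range by (simp add: param_matrix_def)
  ultimately show ?thesis
    by (simp add: scal_minus)
next
  case greater
  have inverse: "p a b * p b a = 1"
    using param_p range by (simp add: param_matrix_def)
  then have cancel: "p a b * (p b a * c) = c" for c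
    by (simp add: mult.assoc[symmetric])
  have "M i b * M j a - scal (q j i * p b a) * M j a * M i b
      + scal (p b a) * M i a * M j b - scal (q j i) * M j b * M i a = 0"
    using manin_M ij range greater unfolding manin_def by blast
  then have "scal (p a b) * (M i b * M j a - scal (q j i * p b a) * M j a * M i b
      + scal (p b a) * M i a * M j b - scal (q j i) * M j b * M i a) = 0"
    by simp
  then show ?thesis
    by (simp add: inverse cancel algebra_simps scal_minus scal_scal)
qed

lemma column_exchange_row_pair:
  assumes ij: "i < j" and range: "i \<in> {1..n}" "j \<in> {1..n}" "a \<in> {1..n}" "b \<in> {1..n}"
    and distinct: "distinct (U @ i # j # V)" and len: "length P = length U"
  shows "scal (eps q (U @ i # j # V)) * prod_list (map2 M (U @ i # j # V) (P @ a # b # S))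
         + scal (eps q (U @ j # i # V)) * prod_list (map2 M (U @ j # i # V) (P @ a # b # S))
       = scal (- p a b) *
         (scal (eps q (U @ i # j # V)) * prod_list (map2 M (U @ i # j # V) (P @ b # a # S))
          + scal (eps q (U @ j # i # V)) * prod_list (map2 M (U @ j # i # V) (P @ b # a # S)))"
proof -
  define e where "e = eps q (U @ i # j # V)"
  define X where "X = prod_list (map2 M U P)"
  define Y where "Y = prod_list (map2 M V S)"
  define \<Delta> where "\<Delta> z w = M i z * M j w - scal (q j i) * M j z * M i w" for z w
  have row_pair: "scal (eps q (U @ i # j # V)) * prod_list (map2 M (U @ i # j # V) (P @ z # w # S))
         + scal (eps q (U @ j # i # V)) * prod_list (map2 M (U @ j # i # V) (P @ z # w # S))
       = scal e * (X * (\<Delta> z w * Y))" for z w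
  proof -
    have "scal (eps q (U @ j # i # V)) = scal e * scal (- q j i)"
      using eps_swap_adjacent[OF distinct ij] by (simp add: e_def mult.commute flip: scal_mult)
    then have "scal (eps q (U @ j # i # V)) * (X * (M j z * M i w * Y))
        = scal e * (X * (scal (- q j i) * M j z * M i w * Y))"
      by (simp add: mult.assoc mult_scal_left_commute[of X])
    then show ?thesis
      using len by (simp add: e_def X_def Y_def \<Delta>_def algebra_simps scal_minus)
  qed
  have "scal e * (X * (\<Delta> a b * Y)) = scal e * (X * (scal (- p a b) * (\<Delta> b a * Y)))"
    using manin_column_exchange[OF ij range] by (simp add: \<Delta>_def mult.assoc)
  also have "\<dots> = scal (- p a b) * (scal e * (X * (\<Delta> b a * Y)))"
    by (simp add: mult_scal_left_commute[of X] scal_scal mult.commute)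
  finally show ?thesis
    unfolding row_pair .
qed

lemma cdet_swap_adjacent_columns:
  assumes K: "sorted_wrt (<) K" "set K \<subseteq> {1..n}"
    and len: "length (P @ a # b # S) = length K" and ab: "a \<in> {1..n}" "b \<in> {1..n}"
  shows "cdet scal q K (P @ a # b # S) M = scal (- p a b) * cdet scal q K (P @ b # a # S) M"
proof -
  let ?A = "permutations_of_set (set K)"
  let ?t = "length P"
  define g where "g J L = scal (eps q L) * prod_list (map2 M L J)" for J L
  have "distinct K"
    using K(1) by (simp add: strict_sorted_iff)
  then have t: "Suc ?t < card (set K)"
    using len by (simp add: distinct_card)
  have "g (P @ a # b # S) L + g (P @ a # b # S) (swap_adjacent ?t L)
      = scal (- p a b) * (g (P @ b # a # S) L + g (P @ b # a # S) (swap_adjacent ?t L))"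
    if LA: "L \<in> ?A" for L
  proof -
    have "Suc ?t < length L"
      using LA t by (simp add: length_finite_permutations_of_set)
    then obtain U i j V where L: "L = U @ i # j # V" and U: "length U = length P"
      by (rule list_split_adjacent)
    have distinct: "distinct (U @ i # j # V)" "distinct (U @ j # i # V)" and "i \<noteq> j"
      using LA L by (auto simp: permutations_of_set_def)
    have "i \<in> set K" "j \<in> set K"
      using LA L by (auto simp: permutations_of_set_def)
    then have range: "i \<in> {1..n}" "j \<in> {1..n}"
      using K(2) by blast+
    have "i < j \<or> j < i"
      using \<open>i \<noteq> j\<close> by linarith
    then show ?thesis
      unfolding g_def L swap_adjacent_append[OF U]
      using column_exchange_row_pair[OF _ range ab distinct(1) U[symmetric]]
        column_exchange_row_pair[OF _ range(2,1) ab distinct(2) U[symmetric]]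
      by (metis add.commute)
  qed
  then have "sum (g (P @ a # b # S)) ?A = scal (- p a b) * sum (g (P @ b # a # S)) ?A"
    by (rule sum_eq_scaled_by_pairs[OF bij_betw_swap_adjacent_permutations_of_set[OF t]])
  then show ?thesis
    using len by (simp add: g_def cdet_eq_sum_permutations_of_set[OF K(1)])
qed

lemma cdet_repeated_adjacent_columns:
  assumes K: "sorted_wrt (<) K" "set K \<subseteq> {1..n}"
    and len: "length (P @ a # a # S) = length K" and a: "a \<in> {1..n}"
  shows "cdet scal q K (P @ a # a # S) M = 0"
proof -
  have "p a a = 1"
    using param_p a by (simp add: param_matrix_def)
  then have "cdet scal q K (P @ a # a # S) M = - cdet scal q K (P @ a # a # S) M"
    using cdet_swap_adjacent_columns[OF K len a a] by (simp add: scal_minus)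
  then have "cdet scal q K (P @ a # a # S) M + cdet scal q K (P @ a # a # S) M = 0 + 0"
    by (metis add.right_inverse add_0)
  then show ?thesis
    by (rule double_cancel)
qed

lemma cdet_insort_column:
  assumes K: "sorted_wrt (<) K" "set K \<subseteq> {1..n}"
  shows "sorted_wrt (<) S \<Longrightarrow> length (P @ x # S) = length K \<Longrightarrow>
    set (P @ x # S) \<subseteq> {1..n} \<Longrightarrow>
    cdet scal q K (P @ x # S) M = scal (eps p (x # S)) * cdet scal q K (P @ insort x S) M"
proof (induction S arbitrary: P)
  case (Cons y S)
  consider "x < y" | "x = y" | "y < x"
    by linarith
  then show ?case
  proof cases
    case 1
    then have "sorted_wrt (<) (x # y # S)"
      using Cons.prems(1) by auto
    then show ?thesis
      using 1 by (simp add: eps_sorted)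
  next
    case 2
    then show ?thesis
      using cdet_repeated_adjacent_columns[OF K, of P x S] Cons.prems by (simp add: eps_def)
  next
    case 3
    have "cdet scal q K (P @ x # y # S) M = scal (- p x y) * cdet scal q K ((P @ [y]) @ x # S) M"
      using cdet_swap_adjacent_columns[OF K, of P x y S] Cons.prems by simp
    also have "\<dots> = scal (- p x y) * (scal (eps p (x # S)) * cdet scal q K ((P @ [y]) @ insort x S) M)"
      using Cons.IH[of "P @ [y]"] Cons.prems by simp
    also have "\<dots> = scal (eps p (x # y # S)) * cdet scal q K (P @ insort x (y # S)) M"
      using 3 eps_Cons_Cons_sorted[OF Cons.prems(1) 3] by (simp add: scal_scal)
    finally show ?thesis .
  qed
qed simp

lemma cdet_sort_columns:
  assumes K: "sorted_wrt (<) K" "set K \<subseteq> {1..n}"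
  shows "length (P @ L) = length K \<Longrightarrow> set (P @ L) \<subseteq> {1..n} \<Longrightarrow>
    cdet scal q K (P @ L) M = scal (eps p L) * cdet scal q K (P @ sort L) M"
proof (induction L arbitrary: P)
  case (Cons x L)
  have IH: "cdet scal q K (P @ x # L) M = scal (eps p L) * cdet scal q K (P @ x # sort L) M"
    using Cons.IH[of "P @ [x]"] Cons.prems by simp
  show ?case
  proof (cases "distinct L")
    case True
    have "cdet scal q K (P @ x # sort L) M
        = scal (eps p (x # sort L)) * cdet scal q K (P @ sort (x # L)) M"
      using cdet_insort_column[OF K, of "sort L" P x] True Cons.prems by (simp add: strict_sorted_iff)
    then show ?thesis
      using IH eps_Cons_sort[of p x L] by (simp add: scal_scal mult.commute)
  next
    case False
    then show ?thesis
      using IH by (simp add: eps_def)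
  qed
qed simp

lemma cdet_permuted_columns:
  assumes "length L = n" "set L \<subseteq> {1..n}"
  shows "cdet scal q [1..<n+1] L M = scal (eps p L) * cdet scal q [1..<n+1] [1..<n+1] M"
proof (cases "distinct L")
  case True
  have "set L = {1..n}"
    using True assms by (intro card_subset_eq) (auto simp: distinct_card)
  then have "sort L = [1..<n+1]"
    using True by (intro sorted_distinct_set_unique) (simp_all add: atLeastLessThanSuc_atLeastAtMost del: upt_Suc)
  then show ?thesis
    using cdet_sort_columns[of "[1..<n+1]" "[]" L] assms
    by (simp add: atLeastLessThanSuc_atLeastAtMost del: upt_Suc)
next
  case False
  then show ?thesis
    using cdet_sort_columns[of "[1..<n+1]" "[]" L] assms
    by (simp add: eps_def atLeastLessThanSuc_atLeastAtMost del: upt_Suc)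
qed

end

definition contracted_cdet ::
  "(complex \<Rightarrow> 'a::ring_1) \<Rightarrow> (nat \<Rightarrow> nat \<Rightarrow> complex) \<Rightarrow> nat \<Rightarrow> (nat \<Rightarrow> nat \<Rightarrow> 'a)
     \<Rightarrow> (nat \<Rightarrow> nat \<Rightarrow> 'a) \<Rightarrow> nat list \<Rightarrow> nat list \<Rightarrow> 'a" where
  "contracted_cdet scal q n M N I J =
     (\<Sum>l | set l \<subseteq> {1..n} \<and> length l = length I.
        cdet scal q [1..<n+1] (compl_idx n I @ rev l) M * prod_list (map2 N l J))"

context manin_matrix
begin

lemma contracted_cdet_eq_sum_permutations:
  assumes I: "distinct I" "set I \<subseteq> {1..n}"
  shows "contracted_cdet scal q n M N I J
       = (\<Sum>l\<in>permutations_of_set (set I).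
            scal (eps p (compl_idx n I @ rev l)) * cdet scal q [1..<n+1] [1..<n+1] M
            * prod_list (map2 N l J))"
proof -
  let ?C = "compl_idx n I"
  let ?W = "{l. set l \<subseteq> {1..n} \<and> length l = length I}"
  define f where "f l = scal (eps p (?C @ rev l)) * cdet scal q [1..<n+1] [1..<n+1] M
    * prod_list (map2 N l J)" for l
  have C: "distinct ?C" "set ?C = {1..n} - set I" "length ?C = n - length I"
    using sorted_compl_idx[of n I] length_compl_idx[OF I]
    by (simp_all add: strict_sorted_iff set_compl_idx)
  have "length I \<le> n"
    using distinct_length_le_card[OF I] by simp
  then have "cdet scal q [1..<n+1] (?C @ rev l) M * prod_list (map2 N l J) = f l" if "l \<in> ?W" for l
    using that C cdet_permuted_columns[of "?C @ rev l"] by (auto simp: f_def)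
  then have "contracted_cdet scal q n M N I J = sum f ?W"
    by (simp add: contracted_cdet_def)
  also have "\<dots> = sum f (permutations_of_set (set I))"
  proof (rule sum.mono_neutral_right)
    show "permutations_of_set (set I) \<subseteq> ?W"
      using I by (auto simp: permutations_of_set_def distinct_card[symmetric])
    show "\<forall>l\<in>?W - permutations_of_set (set I). f l = 0"
      using distinct_append_rev_iff_permutation[OF C(1,2) I] by (auto simp: f_def eps_def)
  qed (simp add: finite_lists_length_eq)
  finally show ?thesis
    by (simp add: f_def)
qed

lemma contracted_cdet_eq_cdet_mult_minor:
  assumes I: "sorted_wrt (<) I" "set I \<subseteq> {1..n}" and J: "length J = length I"
  shows "contracted_cdet scal q n M N I J
       = scal (eps p (compl_idx n I @ rev I)) * cdet scal q [1..<n+1] [1..<n+1] M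
         * cdet scal (pinv p) I J N"
proof -
  let ?C = "compl_idx n I"
  define D where "D = cdet scal q [1..<n+1] [1..<n+1] M"
  have "distinct I"
    using I(1) by (simp add: strict_sorted_iff)
  have "scal (eps p (?C @ rev l)) * D * prod_list (map2 N l J)
      = scal (eps p (?C @ rev I)) * D * (scal (eps (pinv p) l) * prod_list (map2 N l J))"
    if "l \<in> permutations_of_set (set I)" for l
  proof -
    have "distinct ?C" "set ?C \<inter> set I = {}"
      using sorted_compl_idx[of n I] by (auto simp: strict_sorted_iff set_compl_idx)
    then have "eps p (?C @ rev l) = eps p (?C @ rev I) * eps (pinv p) l"
      by (rule eps_append_rev_permutation[OF param_p I _ _ that])
    then show ?thesis
      by (simp add: scal_mult mult.assoc scal_commute[of "eps (pinv p) l" D])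
  qed
  then have "contracted_cdet scal q n M N I J
      = scal (eps p (?C @ rev I)) * D
        * (\<Sum>l\<in>permutations_of_set (set I). scal (eps (pinv p) l) * prod_list (map2 N l J))"
    unfolding contracted_cdet_eq_sum_permutations[OF \<open>distinct I\<close> I(2)] D_def[symmetric]
    by (simp add: sum_distrib_left)
  then show ?thesis
    by (simp only: D_def cdet_eq_sum_permutations_of_set[OF I(1) J])
qed

end

context complex_algebra
begin

lemma sum_row_arrangements_with_suffix:
  assumes J: "set J \<subseteq> {1..n}" and C: "length C = n - length J"
  shows "(\<Sum>L | L \<in> permutations_of_set {1..n} \<and> drop (n - length J) L = rev J.
            scal (eps q L) * prod_list (map2 M (take (n - length J) L) C))
       = (if distinct J then scal (eps q (compl_idx n J @ rev J)) * cdet scal q (compl_idx n J) C M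
          else 0)"
proof (cases "distinct J")
  case True
  let ?Jc = "compl_idx n J"
  have Jc: "sorted_wrt (<) ?Jc" "set ?Jc = {1..n} - set J" "length ?Jc = n - length J"
    using sorted_compl_idx set_compl_idx length_compl_idx[OF True J] by auto
  have "{L \<in> permutations_of_set {1..n}. drop (n - length J) L = rev J}
      = (\<lambda>A. A @ rev J) ` permutations_of_set (set ?Jc)"
    using permutations_of_set_with_suffix[of "{1..n}" "rev J"] True J Jc(2) by simp
  then have "(\<Sum>L | L \<in> permutations_of_set {1..n} \<and> drop (n - length J) L = rev J.
            scal (eps q L) * prod_list (map2 M (take (n - length J) L) C))
      = (\<Sum>A\<in>permutations_of_set (set ?Jc).
            scal (eps q (A @ rev J)) * prod_list (map2 M (take (n - length J) (A @ rev J)) C))"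
    by (simp add: sum.reindex inj_on_def)
  also have "\<dots> = (\<Sum>A\<in>permutations_of_set (set ?Jc).
            scal (eps q (?Jc @ rev J)) * (scal (eps q A) * prod_list (map2 M A C)))"
  proof (rule sum.cong[OF refl])
    fix A assume A: "A \<in> permutations_of_set (set ?Jc)"
    have "distinct (?Jc @ rev J)"
      using True Jc by (auto simp: strict_sorted_iff)
    then have "eps q (A @ rev J) = eps q (?Jc @ rev J) * eps q A"
      by (rule eps_append_permutation[OF Jc(1) A])
    moreover have "length A = n - length J"
      using A Jc by (simp add: length_finite_permutations_of_set strict_sorted_iff distinct_card[symmetric])
    ultimately show "scal (eps q (A @ rev J)) * prod_list (map2 M (take (n - length J) (A @ rev J)) C)
        = scal (eps q (?Jc @ rev J)) * (scal (eps q A) * prod_list (map2 M A C))"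
      by (simp add: scal_mult mult.assoc)
  qed
  also have "\<dots> = scal (eps q (?Jc @ rev J)) * cdet scal q ?Jc C M"
    using C Jc by (simp add: cdet_eq_sum_permutations_of_set sum_distrib_left)
  finally show ?thesis
    using True by simp
next
  case False
  then have "{L. L \<in> permutations_of_set {1..n} \<and> drop (n - length J) L = rev J} = {}"
    by (auto simp: permutations_of_set_def) (metis distinct_drop distinct_rev)
  then show ?thesis
    using False by (simp only: sum.empty if_False)
qed

lemma contracted_cdet_eq_sum_row_arrangements:
  assumes I: "distinct I" "set I \<subseteq> {1..n}" and J: "length J = length I" "set J \<subseteq> {1..n}"
    and inv: "\<And>i j. i \<in> {1..n} \<Longrightarrow> j \<in> {1..n} \<Longrightarrow> mat_mult n M N i j = mat_one i j"
  shows "contracted_cdet scal q n M N I J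
       = (\<Sum>L | L \<in> permutations_of_set {1..n} \<and> drop (n - length J) L = rev J.
            scal (eps q L) * prod_list (map2 M (take (n - length J) L) (compl_idx n I)))"
proof -
  let ?C = "compl_idx n I"
  let ?m = "n - length I"
  let ?W = "{l. set l \<subseteq> {1..n} \<and> length l = length I}"
  let ?P = "permutations_of_set {1..n}"
  define X where "X L = prod_list (map2 M (take ?m L) ?C)" for L
  define A where "A L l = prod_list (rev (map2 M (rev (drop ?m L)) l))" for L l
  define B where "B l = prod_list (map2 N l J)" for l
  have "length I \<le> n"
    using distinct_length_le_card[OF I] by simp
  have length_P: "length L = n" if "L \<in> ?P" for L
    using that by (simp add: length_finite_permutations_of_set)
  have expand: "cdet scal q [1..<n+1] (?C @ rev l) M = (\<Sum>L\<in>?P. scal (eps q L) * (X L * A L l))"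
    if "l \<in> ?W" for l
    using that cdet_upto_append_rev[where C = ?C and l = l and scal = scal and q = q and X = M]
      length_compl_idx[OF I] \<open>length I \<le> n\<close>
    by (simp add: X_def A_def)
  have contract: "(\<Sum>l\<in>?W. A L l * B l) = (if drop ?m L = rev J then 1 else 0)" if "L \<in> ?P" for L
  proof -
    have "set (rev (drop ?m L)) \<subseteq> {1..n}" "length (rev (drop ?m L)) = length I"
      using that \<open>length I \<le> n\<close> length_P[OF that]
      by (auto simp: permutations_of_set_def dest: in_set_dropD)
    from contract_right_inverse[OF inv, of "rev (drop ?m L)" J, unfolded this(2)] this
    show ?thesis
      using J by (auto simp: A_def B_def)
  qed
  have "contracted_cdet scal q n M N I J = (\<Sum>l\<in>?W. \<Sum>L\<in>?P. scal (eps q L) * X L * (A L l * B l))"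
    unfolding contracted_cdet_def
    by (intro sum.cong refl) (simp only: expand, simp add: B_def sum_distrib_right mult.assoc)
  also have "\<dots> = (\<Sum>L\<in>?P. scal (eps q L) * X L * (\<Sum>l\<in>?W. A L l * B l))"
    by (subst sum.swap) (simp add: sum_distrib_left)
  also have "\<dots> = (\<Sum>L\<in>?P. if drop ?m L = rev J then scal (eps q L) * X L else 0)"
    by (intro sum.cong refl) (simp only: contract, simp)
  also have "\<dots> = (\<Sum>L | L \<in> ?P \<and> drop ?m L = rev J. scal (eps q L) * X L)"
    by (simp add: sum.inter_filter)
  finally show ?thesis
    using J by (simp add: X_def)
qed

lemma contracted_cdet_eq_complementary_minor:
  assumes I: "distinct I" "set I \<subseteq> {1..n}" and J: "length J = length I" "set J \<subseteq> {1..n}"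
    and inv: "\<And>i j. i \<in> {1..n} \<Longrightarrow> j \<in> {1..n} \<Longrightarrow> mat_mult n M N i j = mat_one i j"
  shows "contracted_cdet scal q n M N I J
       = (if distinct J then scal (eps q (compl_idx n J @ rev J)) * cdet scal q (compl_idx n J) (compl_idx n I) M
          else 0)"
  using contracted_cdet_eq_sum_row_arrangements[OF assms] sum_row_arrangements_with_suffix[OF J(2)]
    length_compl_idx[OF I] J(1) by simp

end

theorem mainTheorem8:
  fixes scal :: "complex \<Rightarrow> 'a::ring_1"
    and n :: nat
    and q p :: "nat \<Rightarrow> nat \<Rightarrow> complex"
    and M Minv :: "nat \<Rightarrow> nat \<Rightarrow> 'a"
    and I J :: "nat list"
  assumes alg: "complex_algebra_map scal"
    and pq: "param_matrix n q" and pp: "param_matrix n p"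
    and man: "manin scal n q p M"
    and inv: "is_inverse n M Minv"
    and Iinc: "sorted_wrt (<) I" and Irange: "set I \<subseteq> {1..n}"
    and Jlen: "length J = length I" and Jrange: "set J \<subseteq> {1..n}"
  shows "scal (eps p (compl_idx n I @ rev I)) * cdet scal q [1..<n+1] [1..<n+1] M
           * cdet scal (pinv p) I J Minv
         = (if distinct J
            then scal (eps q (compl_idx n J @ rev J)) * cdet scal q (compl_idx n J) (compl_idx n I) M
            else 0)"
proof -
  interpret manin_matrix scal n q p M
    using alg pp man by unfold_locales
  have "distinct I"
    using Iinc by (simp add: strict_sorted_iff)
  have right_inverse: "mat_mult n M Minv i j = mat_one i j" if "i \<in> {1..n}" "j \<in> {1..n}" for i j
    using inv that by (simp add: is_inverse_def)
  show ?thesis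
    using contracted_cdet_eq_cdet_mult_minor[OF Iinc Irange Jlen, of Minv]
      contracted_cdet_eq_complementary_minor[OF \<open>distinct I\<close> Irange Jlen Jrange right_inverse]
    by simp
qed

end
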